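(* Let $L$ be a finite lattice and let $\iota\colon L\to BC(L)$, $x\mapsto{\uparrow}x\cap\mathcal{M}(L)$. For every distributive lattice $\hat L$ for which there exists a join-semilattice embedding $\varphi\colon L\to\hat L$, there exists a join-semilattice embedding $\varepsilon\colon BC(L)\to\hat L$ such that $\varphi=\varepsilon\circ\iota$.
   Context: For a finite lattice $L$, $\mathcal{M}(L)$ denotes the set of meet-irreducible elements of $L$ (elements $x$ such that $x=\bigwedge X$ implies $x\in X$ for all $X\subseteq L$), ordered by the order of $L$; ${\uparrow}x=\{a\in L\mid a\ge x\}$. For an ordered set $P$, $\mathcal{F}(P)$ is the set of order filters (up-sets) of $P$. The (up-set) Birkhoff completion is $BC(L):=(\mathcal{F}(\mathcal{M}(L)),\supseteq)$, whose binary join is intersection. A join-semilattice embedding between lattices is an injective map preserving binary joins. *)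

theory Defs
  imports Main
begin

(* A finite lattice is modelled as a type of class {finite, complete_lattice};
   every (nonempty) finite lattice is complete, so this is no restriction. *)

definition meet_irreducibles :: "('a::complete_lattice) set" where
  "meet_irreducibles = {x. \<forall>X. x = Inf X \<longrightarrow> x \<in> X}"

definition BC :: "('a::complete_lattice) set set" where
  "BC = {F. F \<subseteq> meet_irreducibles \<and>
            (\<forall>a\<in>F. \<forall>b\<in>meet_irreducibles. a \<le> b \<longrightarrow> b \<in> F)}"

definition iota :: "('a::complete_lattice) \<Rightarrow> 'a set" where
  "iota x = {a. x \<le> a} \<inter> meet_irreducibles"

definition join_emb :: "('a::lattice \<Rightarrow> 'b::lattice) \<Rightarrow> bool" where
  "join_emb f \<longleftrightarrow> inj f \<and> (\<forall>x y. f (sup x y) = sup (f x) (f y))"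

(* join-semilattice embedding from BC(L) (ordered by \<supseteq>, join = \<inter>) *)
definition join_emb_BC :: "('a::complete_lattice set \<Rightarrow> 'b::lattice) \<Rightarrow> bool" where
  "join_emb_BC e \<longleftrightarrow> inj_on e BC \<and>
     (\<forall>F\<in>BC. \<forall>G\<in>BC. e (F \<inter> G) = sup (e F) (e G))"

end

theory Submission
  imports Defs
begin

text \<open>Write \<open>\<kappa> m\<close> (\<open>Inf_outside \<phi> m\<close> below) for the meet in the target lattice of all \<open>\<phi> y\<close> with \<open>y \<notin> \<down>m\<close>, and
  \<open>\<epsilon> F = \<phi> \<bottom> \<squnion> \<Squnion>{\<kappa> m | m \<in> M(L) - F}\<close> for an up-set \<open>F\<close> of \<open>M(L)\<close>. Every \<open>x\<close> is the meet of the meet-irreducibles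
  above it, so any choice of one \<open>y\<^sub>m \<notin> \<down>m\<close> for each meet-irreducible \<open>m \<notin> \<up>x\<close> has a join above
  \<open>x\<close>; distributivity turns this into \<open>\<phi> x \<le> \<epsilon> (\<iota> x)\<close>, and the converse bound is immediate.
  \<open>\<epsilon>\<close> turns intersections into joins by construction. For injectivity, if \<open>\<kappa> m \<le> \<phi> m\<close>,
  distributivity gives \<open>\<phi> m\<^sup>+ \<le> \<phi> m \<squnion> \<kappa> m = \<phi> m\<close> for the unique upper cover \<open>m\<^sup>+\<close> of \<open>m\<close>,
  contradicting injectivity of \<open>\<phi>\<close>; hence \<open>\<kappa> m\<close> lies below \<open>\<epsilon> F\<close> but not below \<open>\<epsilon> G\<close>
  whenever \<open>m \<in> G - F\<close>.\<close>

lemma Sup_fin_insert_insert: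
  fixes c d :: "'a::lattice"
  assumes "finite X"
  shows "Sup_fin (insert c (insert d X)) = sup (Sup_fin (insert c X)) d"
proof -
  have "insert c (insert d X) = insert d (insert c X)" by auto
  then show ?thesis using assms by (simp add: sup_commute)
qed

lemma Sup_fin_insert_sup:
  fixes c d :: "'a::lattice"
  assumes "finite X"
  shows "Sup_fin (insert (sup c d) X) = sup (Sup_fin (insert c X)) d"
  using assms by (cases "X = {}") (simp_all add: ac_simps)

lemma Sup_fin_insert_Un:
  fixes c :: "'a::lattice"
  assumes "finite P" "finite Q"
  shows "Sup_fin (insert c (P \<union> Q)) = sup (Sup_fin (insert c P)) (Sup_fin (insert c Q))"
proof -
  have "insert c (P \<union> Q) = insert c P \<union> insert c Q" by auto
  then show ?thesis using assms by (metis Sup_fin.union finite_insert insert_not_empty)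
qed

text \<open>One inequality of the distributive law
  \<open>\<Squnion>\<^sub>i \<Sqinter> f ` A\<^sub>i = \<Sqinter>\<^sub>s \<Squnion>\<^sub>i f (s i)\<close> (over all choice functions \<open>s\<close>);
  the extra joinand \<open>c\<close> is there because the lattice need not have a bottom.\<close>

lemma le_Sup_fin_Inf_fin_if_le_all_choices:
  fixes f :: "'x \<Rightarrow> 'b::distrib_lattice"
  assumes "finite I"
    and "\<forall>i\<in>I. finite (A i) \<and> A i \<noteq> {}"
    and "\<forall>s. (\<forall>i\<in>I. s i \<in> A i) \<longrightarrow> b \<le> Sup_fin (insert c ((\<lambda>i. f (s i)) ` I))"
  shows "b \<le> Sup_fin (insert c ((\<lambda>i. Inf_fin (f ` A i)) ` I))"
  using assms
proof (induction I arbitrary: c rule: finite_induct)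
  case empty
  then show ?case by auto
next
  case (insert i I)
  let ?g = "\<lambda>i. Inf_fin (f ` A i)"
  let ?R = "Sup_fin (insert c (?g ` I))"
  have A_i: "finite (A i)" "A i \<noteq> {}" using insert.prems by auto
  have "b \<le> sup ?R (f y)" if "y \<in> A i" for y
  proof -
    have "b \<le> Sup_fin (insert (sup c (f y)) (?g ` I))"
    proof (rule insert.IH)
      show "\<forall>j\<in>I. finite (A j) \<and> A j \<noteq> {}" using insert.prems by auto
      show "\<forall>s. (\<forall>j\<in>I. s j \<in> A j) \<longrightarrow>
          b \<le> Sup_fin (insert (sup c (f y)) ((\<lambda>j. f (s j)) ` I))"
      proof (intro allI impI)
        fix s assume s: "\<forall>j\<in>I. s j \<in> A j"
        then have "\<forall>j\<in>insert i I. (s(i := y)) j \<in> A j" using that by auto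
        then have "b \<le> Sup_fin (insert c ((\<lambda>j. f ((s(i := y)) j)) ` insert i I))"
          using insert.prems by blast
        also have "(\<lambda>j. f ((s(i := y)) j)) ` insert i I = insert (f y) ((\<lambda>j. f (s j)) ` I)"
          using insert.hyps by auto
        also have "Sup_fin (insert c \<dots>) = Sup_fin (insert (sup c (f y)) ((\<lambda>j. f (s j)) ` I))"
          using insert.hyps
          by (simp only: Sup_fin_insert_insert[OF finite_imageI] Sup_fin_insert_sup[OF finite_imageI])
        finally show "b \<le> Sup_fin (insert (sup c (f y)) ((\<lambda>j. f (s j)) ` I))" .
      qed
    qed
    then show ?thesis using insert.hyps by (simp add: Sup_fin_insert_sup)
  qed
  then have "b \<le> Inf_fin {sup ?R a |a. a \<in> f ` A i}"
    using A_i by (auto simp: Inf_fin.bounded_iff)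
  also have "\<dots> = sup ?R (?g i)"
    using A_i by (simp add: sup_Inf1_distrib)
  also have "\<dots> = Sup_fin (insert c (?g ` insert i I))"
    using insert.hyps by (simp only: image_insert Sup_fin_insert_insert[OF finite_imageI])
  finally show ?case .
qed

lemma sup_preserving_mono:
  fixes \<phi> :: "'a::semilattice_sup \<Rightarrow> 'b::semilattice_sup"
  assumes "\<And>x y. \<phi> (sup x y) = sup (\<phi> x) (\<phi> y)"
  shows "mono \<phi>"
  by (metis assms le_iff_sup monoI)

lemma sup_preserving_Sup_fin:
  fixes \<phi> :: "'a::lattice \<Rightarrow> 'b::lattice"
  assumes "\<And>x y. \<phi> (sup x y) = sup (\<phi> x) (\<phi> y)" and "finite N" "N \<noteq> {}"
  shows "\<phi> (Sup_fin N) = Sup_fin (\<phi> ` N)"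
  using assms(2,3) by (induction N rule: finite_ne_induct) (simp_all add: assms(1))

lemma sup_preserving_Sup_insert:
  fixes \<phi> :: "'a::{finite, complete_lattice} \<Rightarrow> 'b::lattice"
  assumes "\<And>x y. \<phi> (sup x y) = sup (\<phi> x) (\<phi> y)"
  shows "\<phi> (Sup (insert a (s ` I))) = Sup_fin (insert (\<phi> a) ((\<lambda>i. \<phi> (s i)) ` I))"
proof -
  have "\<phi> (Sup (insert a (s ` I))) = \<phi> (Sup_fin (insert a (s ` I)))"
    by (simp add: Sup_fin_Sup)
  also have "\<dots> = Sup_fin (\<phi> ` insert a (s ` I))"
    using assms by (simp add: sup_preserving_Sup_fin)
  finally show ?thesis by (simp add: image_image)
qed

lemma top_notin_meet_irreducibles: "(top::'a::complete_lattice) \<notin> meet_irreducibles"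
  unfolding meet_irreducibles_def by (auto intro: exI[of _ "{}"])

lemma meet_irreducible_less_Inf_greater:
  fixes m :: "'a::complete_lattice"
  assumes "m \<in> meet_irreducibles"
  shows "m < Inf {y. m < y}"
proof -
  have "m \<le> Inf {y. m < y}" by (auto intro: Inf_greatest)
  moreover have "m \<noteq> Inf {y. m < y}" using assms unfolding meet_irreducibles_def by auto
  ultimately show ?thesis by simp
qed

lemma Inf_meet_irreducibles_above:
  fixes x :: "'a::{finite, complete_lattice}"
  shows "Inf {m \<in> meet_irreducibles. x \<le> m} = x"
proof (induction "card {z. x < z}" arbitrary: x rule: less_induct)
  case less
  show ?case
  proof (cases "x \<in> meet_irreducibles")
    case True
    then show ?thesis by (auto intro: antisym Inf_lower Inf_greatest)
  next
    case False
    then obtain X where X: "x = Inf X" "x \<notin> X" unfolding meet_irreducibles_def by auto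
    have "Inf {m \<in> meet_irreducibles. x \<le> m} \<le> y" if "y \<in> X" for y
    proof -
      have "x < y" using X that by (metis Inf_lower order.not_eq_order_implies_strict)
      then have "card {z. y < z} < card {z. x < z}"
        by (intro psubset_card_mono) auto
      then have "Inf {m \<in> meet_irreducibles. y \<le> m} = y" using less by blast
      moreover have "Inf {m \<in> meet_irreducibles. x \<le> m} \<le> Inf {m \<in> meet_irreducibles. y \<le> m}"
        using \<open>x < y\<close> by (intro Inf_superset_mono) auto
      ultimately show ?thesis by simp
    qed
    then show ?thesis using X by (auto intro: antisym Inf_greatest)
  qed
qed

lemma le_Sup_of_choice_not_below:
  fixes x :: "'a::{finite, complete_lattice}"
  assumes "\<forall>m \<in> meet_irreducibles. \<not> x \<le> m \<longrightarrow> \<not> s m \<le> m"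
  shows "x \<le> Sup (s ` {m \<in> meet_irreducibles. \<not> x \<le> m})"
    (is "x \<le> ?z")
proof (rule ccontr)
  assume "\<not> x \<le> ?z"
  then have "\<not> x \<le> Inf {m \<in> meet_irreducibles. ?z \<le> m}"
    by (simp add: Inf_meet_irreducibles_above)
  then obtain m where m: "m \<in> meet_irreducibles" "?z \<le> m" "\<not> x \<le> m"
    by (auto simp: le_Inf_iff)
  moreover have "s m \<le> ?z" using m by (auto intro: Sup_upper)
  ultimately have "s m \<le> m" by simp
  then show False using assms m by blast
qed

definition Inf_outside :: "('a::{finite, complete_lattice} \<Rightarrow> 'b::lattice) \<Rightarrow> 'a \<Rightarrow> 'b" where
  "Inf_outside \<phi> m = Inf_fin (\<phi> ` {y. \<not> y \<le> m})"

text \<open>The joinand \<open>\<phi> \<bottom>\<close> stands in for the empty join, which need not exist in \<open>'b\<close>.\<close>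

definition BC_extension :: "('a::{finite, complete_lattice} \<Rightarrow> 'b::lattice) \<Rightarrow> 'a set \<Rightarrow> 'b" where
  "BC_extension \<phi> F = Sup_fin (insert (\<phi> bot) (Inf_outside \<phi> ` (meet_irreducibles - F)))"

lemma Inf_outside_le:
  "\<not> y \<le> m \<Longrightarrow> Inf_outside \<phi> m \<le> \<phi> y"
  unfolding Inf_outside_def by (simp add: Inf_fin.coboundedI)

lemma Inf_outside_le_BC_extension:
  "m \<in> meet_irreducibles - F \<Longrightarrow> Inf_outside \<phi> m \<le> BC_extension \<phi> F"
  unfolding BC_extension_def by (simp add: Sup_fin.coboundedI)

lemma BC_extension_le:
  assumes "mono \<phi>" and "\<And>m. m \<in> meet_irreducibles - F \<Longrightarrow> \<not> y \<le> m"
  shows "BC_extension \<phi> F \<le> \<phi> y"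
  unfolding BC_extension_def
  using assms by (auto simp: Sup_fin.bounded_iff monoD Inf_outside_le)

lemma BC_extension_Int:
  "BC_extension \<phi> (F \<inter> G) = sup (BC_extension \<phi> F) (BC_extension \<phi> G)"
  unfolding BC_extension_def Diff_Int image_Un by (simp add: Sup_fin_insert_Un)

lemma BC_extension_iota:
  fixes \<phi> :: "'a::{finite, complete_lattice} \<Rightarrow> 'b::distrib_lattice"
  assumes sup_hom: "\<And>x y. \<phi> (sup x y) = sup (\<phi> x) (\<phi> y)"
  shows "BC_extension \<phi> (iota x) = \<phi> x"
proof (rule antisym)
  let ?I = "{m \<in> meet_irreducibles. \<not> x \<le> m}"
  have mono: "mono \<phi>" using sup_hom by (rule sup_preserving_mono)
  have outside: "meet_irreducibles - iota x = ?I" unfolding iota_def by auto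
  show "BC_extension \<phi> (iota x) \<le> \<phi> x"
    using mono by (rule BC_extension_le) (simp add: outside)
  have "\<phi> x \<le> Sup_fin (insert (\<phi> bot) ((\<lambda>m. Inf_fin (\<phi> ` {y. \<not> y \<le> m})) ` ?I))"
  proof (rule le_Sup_fin_Inf_fin_if_le_all_choices)
    show "\<forall>m\<in>?I. finite {y. \<not> y \<le> m} \<and> {y. \<not> y \<le> m} \<noteq> {}"
      by auto
    show "\<forall>s. (\<forall>m\<in>?I. s m \<in> {y. \<not> y \<le> m}) \<longrightarrow>
        \<phi> x \<le> Sup_fin (insert (\<phi> bot) ((\<lambda>m. \<phi> (s m)) ` ?I))"
    proof (intro allI impI)
      fix s assume "\<forall>m\<in>?I. s m \<in> {y. \<not> y \<le> m}"
      then have "x \<le> Sup (insert bot (s ` ?I))"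
        using le_Sup_of_choice_not_below[of x s] by simp
      then have "\<phi> x \<le> \<phi> (Sup (insert bot (s ` ?I)))"
        using mono by (simp add: monoD)
      also have "\<dots> = Sup_fin (insert (\<phi> bot) ((\<lambda>m. \<phi> (s m)) ` ?I))"
        using sup_hom by (rule sup_preserving_Sup_insert)
      finally show "\<phi> x \<le> Sup_fin (insert (\<phi> bot) ((\<lambda>m. \<phi> (s m)) ` ?I))" .
    qed
  qed simp
  then show "\<phi> x \<le> BC_extension \<phi> (iota x)"
    unfolding BC_extension_def Inf_outside_def outside by (simp add: image_image)
qed

lemma Inf_outside_not_le:
  fixes \<phi> :: "'a::{finite, complete_lattice} \<Rightarrow> 'b::distrib_lattice"
  assumes "join_emb \<phi>" and m: "m \<in> meet_irreducibles"
  shows "\<not> Inf_outside \<phi> m \<le> \<phi> m"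
proof
  assume le: "Inf_outside \<phi> m \<le> \<phi> m"
  have inj: "inj \<phi>" and sup_hom: "\<And>x y. \<phi> (sup x y) = sup (\<phi> x) (\<phi> y)"
    using assms(1) unfolding join_emb_def by auto
  have mono: "mono \<phi>" using sup_hom by (rule sup_preserving_mono)
  let ?cover = "Inf {y. m < y}"
  let ?outside = "{y. \<not> y \<le> m}"
  have outside_ne: "?outside \<noteq> {}"
    using m top_notin_meet_irreducibles by (metis empty_iff mem_Collect_eq top_unique)
  have "\<phi> ?cover \<le> sup (\<phi> m) (\<phi> y)" if "\<not> y \<le> m" for y
  proof -
    have "m < sup m y" using that by (simp add: less_le_not_le)
    then have "?cover \<le> sup m y" by (simp add: Inf_lower)
    then have "\<phi> ?cover \<le> \<phi> (sup m y)" using mono by (simp add: monoD)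
    then show ?thesis by (simp add: sup_hom)
  qed
  then have "\<phi> ?cover \<le> Inf_fin {sup (\<phi> m) a |a. a \<in> \<phi> ` ?outside}"
    using outside_ne by (auto simp: Inf_fin.bounded_iff)
  also have "\<dots> = sup (\<phi> m) (Inf_outside \<phi> m)"
    unfolding Inf_outside_def using outside_ne by (simp add: sup_Inf1_distrib)
  also have "\<dots> = \<phi> m" using le by (simp add: sup_absorb1)
  finally have "\<phi> ?cover \<le> \<phi> m" .
  moreover have m_less: "m < ?cover" using m by (rule meet_irreducible_less_Inf_greater)
  then have "\<phi> m \<le> \<phi> ?cover" using mono by (simp add: monoD)
  ultimately have "\<phi> ?cover = \<phi> m" by simp
  then show False using inj m_less by (simp add: inj_eq)
qed

lemma inj_on_BC_extension:
  fixes \<phi> :: "'a::{finite, complete_lattice} \<Rightarrow> 'b::distrib_lattice"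
  assumes "join_emb \<phi>"
  shows "inj_on (BC_extension \<phi>) BC"
proof -
  have ne: "BC_extension \<phi> F \<noteq> BC_extension \<phi> G"
    if "F \<in> BC" "G \<in> BC" "m \<in> G" "m \<notin> F" for F G m
  proof
    assume eq: "BC_extension \<phi> F = BC_extension \<phi> G"
    have m: "m \<in> meet_irreducibles" using that unfolding BC_def by auto
    have "mono \<phi>"
      using assms unfolding join_emb_def by (simp add: sup_preserving_mono)
    moreover have "\<not> m \<le> m'" if "m' \<in> meet_irreducibles - G" for m'
      using that \<open>G \<in> BC\<close> \<open>m \<in> G\<close> unfolding BC_def by auto
    ultimately have "BC_extension \<phi> G \<le> \<phi> m" by (rule BC_extension_le)
    then have "Inf_outside \<phi> m \<le> \<phi> m"
      using Inf_outside_le_BC_extension[of m F \<phi>] m \<open>m \<notin> F\<close> eq by simp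
    then show False using Inf_outside_not_le[OF assms m] by simp
  qed
  show ?thesis
  proof (rule inj_onI)
    fix F G assume F: "F \<in> BC" and G: "G \<in> BC"
      and eq: "BC_extension \<phi> F = BC_extension \<phi> G"
    show "F = G"
    proof (rule subset_antisym)
      show "F \<subseteq> G" using ne[OF G F] eq by auto
      show "G \<subseteq> F" using ne[OF F G] eq by auto
    qed
  qed
qed

theorem mainTheorem3:
  fixes \<phi> :: "'a::{finite, complete_lattice} \<Rightarrow> 'b::distrib_lattice"
  assumes "join_emb \<phi>"
  shows "\<exists>\<epsilon> :: 'a set \<Rightarrow> 'b. join_emb_BC \<epsilon> \<and> (\<forall>x. \<phi> x = \<epsilon> (iota x))"
proof (intro exI conjI allI)
  show "join_emb_BC (BC_extension \<phi>)"
    unfolding join_emb_BC_def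
    using inj_on_BC_extension[OF assms] BC_extension_Int by blast
  have "\<And>x y. \<phi> (sup x y) = sup (\<phi> x) (\<phi> y)" using assms unfolding join_emb_def by blast
  then show "\<phi> x = BC_extension \<phi> (iota x)" for x by (simp add: BC_extension_iota)
qed

end
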